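(* Let $t\ge1$ and $n=2(t+1)^2$. Let $\mathcal{C}_0\subseteq\mathbb{Z}_n^2$ be a linear $t$-error-correcting diameter perfect code with generator matrix $G_0$, and let $\mathcal{C}=\mathbf{x}+\mathcal{C}_0$ for some $\mathbf{x}=(x_1,x_2)\in\mathbb{Z}_n^2$. Suppose $\mathcal{C}$ is of Case I or Case II, and let $\mathcal{S}$ be the set of diameter perfect Sudoku grids with respect to $\mathcal{C}$ and its anticodes. (i) If $\mathcal{C}$ is of Case I, let $\mathcal{G}_\mathcal{S}=\langle \tau_1^{t+1}\tau_2^{t+1},\ \tau_2^{2(t+1)},\ \tau_2^{2x_2+1}s,\ \tau_1^{2x_1+2}\tau_2^{2x_2+1}r^2\rangle$. (ii) If $\mathcal{C}$ is of Case II and $G_0=[a~~b]$, let $\mathcal{G}_\mathcal{S}=\langle \tau_1^{a}\tau_2^{b},\ \tau_1^{2x_1+2}\tau_2^{2x_2+1}r^2\rangle$. Then in either case, for every $S\in\mathcal{S}$ and every $g\in\mathcal{G}_\mathcal{S}$, $g\cdot S\in\mathcal{S}$.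
   Context: $\mathbb{Z}_n$ is the integers modulo $n$; Lee weight $\mathrm{wt}_L(\mathbf{u})=\sum_i\min\{u_i,n-u_i\}$, Lee distance $d_L(\mathbf{u},\mathbf{v})=\mathrm{wt}_L(\mathbf{u}-\mathbf{v})$. A linear code is a submodule of $\mathbb{Z}_n^2$; its generator matrix has rows forming a minimal spanning set. Codes $\mathcal{C}_1,\mathcal{C}_2$ are equivalent if $\mathcal{C}_1P=\mathcal{C}_2$ for a permutation matrix $P$. For an adjacent pair $\{p_1,p_2\}$ (Lee distance 1), $\mathcal{A}_{2t+1}$ is the set of points at Lee distance at most $t$ from $p_1$ or $p_2$; $\{p_1,p_2\}$ is its core; in $\mathbb{Z}_n^2$ it has $2(t+1)^2=n$ points and is a maximum-size anticode of diameter $2t+1$. A $t$-error-correcting diameter perfect code here means a $(2t+1)$-diameter perfect code $\mathcal{C}\subseteq\mathbb{Z}_n^2$ with minimum distance $2t+2$ and anticode $\mathcal{A}_{2t+1}$, i.e. $|\mathcal{C}|\cdot|\mathcal{A}_{2t+1}|=n^2$, so $|\mathcal{C}|=n$. Case I: $\mathcal{C}_0$ is equivalent to the code $\mathcal{C}'$ generated by $\begin{bmatrix}t+1&t+1\\0&2(t+1)\end{bmatrix}$; Case II: $\mathcal{C}_0$ is equivalent to the code $\mathcal{C}''$ generated by $[1~~2t+1]$. Convention: for each codeword $\mathbf{c}$, the associated translate of $\mathcal{A}_{2t+1}$ has core $\{\mathbf{c},\mathbf{c}+(1,0)\}$; these $n$ translates partition $\mathbb{Z}_n^2$. Writing $\mathcal{C}=\{\mathbf{c}_1,\dots,\mathbf{c}_n\}$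 and $\mathcal{A}_i$ for the translate associated to $\mathbf{c}_i$, the palette grid $\mathcal{I}_{\mathcal{C},\mathcal{A}}$ is the $n\times n$ array (rows/columns indexed by $\mathbb{Z}_n$, position $(x,y)$ = row $x$, column $y$) with entry $i$ at each position of $\mathcal{A}_i$. Two $n\times n$ arrays over $n$-sets are orthogonal if all $n^2$ ordered pairs of corresponding entries are distinct. A diameter perfect Sudoku grid is a Latin square of order $n$ on $[n]$ orthogonal to $\mathcal{I}_{\mathcal{C},\mathcal{A}}$. Maps on arrays (indices mod $n$): $(r(A))_{i,j}=A_{n-1-j,i}$, $(s(A))_{i,j}=A_{i,n-1-j}$, $(\tau_1(A))_{i,j}=A_{i-1,j}$, $(\tau_2(A))_{i,j}=A_{i,j-1}$; the generated group acts by $\varphi\cdot A=\varphi(A)$. *)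

theory Defs
  imports Main
begin

text \<open>Elements of Z_n are represented by integers in {0..<n}; points of Z_n^2 by pairs.\<close>

definition zn2 :: "int \<Rightarrow> (int \<times> int) set" where
  "zn2 n = {0..<n} \<times> {0..<n}"

definition lee_wt1 :: "int \<Rightarrow> int \<Rightarrow> int" where
  "lee_wt1 n u = min (u mod n) (n - u mod n)"

definition lee_dist :: "int \<Rightarrow> int \<times> int \<Rightarrow> int \<times> int \<Rightarrow> int" where
  "lee_dist n u v = lee_wt1 n (fst u - fst v) + lee_wt1 n (snd u - snd v)"

definition addpt :: "int \<Rightarrow> int \<times> int \<Rightarrow> int \<times> int \<Rightarrow> int \<times> int" where
  "addpt n p q = ((fst p + fst q) mod n, (snd p + snd q) mod n)"

definition linear_code :: "int \<Rightarrow> (int \<times> int) set \<Rightarrow> bool" where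
  "linear_code n C \<longleftrightarrow> C \<subseteq> zn2 n \<and> (0, 0) \<in> C
     \<and> (\<forall>p\<in>C. \<forall>q\<in>C. addpt n p q \<in> C)
     \<and> (\<forall>k::int. \<forall>p\<in>C. ((k * fst p) mod n, (k * snd p) mod n) \<in> C)"

definition anticode :: "int \<Rightarrow> nat \<Rightarrow> int \<times> int \<Rightarrow> (int \<times> int) set" where
  "anticode n t c = {p \<in> zn2 n. lee_dist n p c \<le> int t \<or> lee_dist n p (addpt n c (1, 0)) \<le> int t}"

definition dp_code :: "int \<Rightarrow> nat \<Rightarrow> (int \<times> int) set \<Rightarrow> bool" where
  "dp_code n t C \<longleftrightarrow> C \<subseteq> zn2 n
     \<and> (\<forall>c\<in>C. \<forall>c'\<in>C. c \<noteq> c' \<longrightarrow> lee_dist n c c' \<ge> 2 * int t + 2)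
     \<and> (\<exists>c\<in>C. \<exists>c'\<in>C. c \<noteq> c' \<and> lee_dist n c c' = 2 * int t + 2)
     \<and> int (card C) * int (card (anticode n t (0, 0))) = n ^ 2"

text \<open>Equivalence via a 2x2 permutation matrix (identity or coordinate swap).\<close>
definition code_equiv :: "(int \<times> int) set \<Rightarrow> (int \<times> int) set \<Rightarrow> bool" where
  "code_equiv C1 C2 \<longleftrightarrow> C2 = C1 \<or> C2 = (\<lambda>(u, v). (v, u)) ` C1"

definition translate :: "int \<Rightarrow> int \<times> int \<Rightarrow> (int \<times> int) set \<Rightarrow> (int \<times> int) set" where
  "translate n x C = addpt n x ` C"

definition caseI_code :: "int \<Rightarrow> nat \<Rightarrow> (int \<times> int) set" where
  "caseI_code n t = {((k * (int t + 1)) mod n, (k * (int t + 1) + m * (2 * (int t + 1))) mod n) | k m. True}"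

definition row_code :: "int \<Rightarrow> int \<times> int \<Rightarrow> (int \<times> int) set" where
  "row_code n g = {((k * fst g) mod n, (k * snd g) mod n) | k. True}"

definition caseII_code :: "int \<Rightarrow> nat \<Rightarrow> (int \<times> int) set" where
  "caseII_code n t = row_code n (1, 2 * int t + 1)"

text \<open>Arrays: entry at row i, column j is A i j (indices read modulo n, only
  positions in {0..<n}^2 matter).\<close>
type_synonym array = "int \<Rightarrow> int \<Rightarrow> int"

text \<open>Palette grid, labelled by codewords: position p gets the codeword whose
  associated anticode translate contains p.\<close>
definition palette :: "int \<Rightarrow> nat \<Rightarrow> (int \<times> int) set \<Rightarrow> int \<times> int \<Rightarrow> int \<times> int" where
  "palette n t C p = (THE c. c \<in> C \<and> p \<in> anticode n t c)"

definition latin_square :: "int \<Rightarrow> array \<Rightarrow> bool" where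
  "latin_square n L \<longleftrightarrow>
     (\<forall>i\<in>{0..<n}. \<forall>j\<in>{0..<n}. L i j \<in> {1..n})
     \<and> (\<forall>i\<in>{0..<n}. inj_on (\<lambda>j. L i j) {0..<n})
     \<and> (\<forall>j\<in>{0..<n}. inj_on (\<lambda>i. L i j) {0..<n})"

definition orthogonal_to_palette :: "int \<Rightarrow> nat \<Rightarrow> (int \<times> int) set \<Rightarrow> array \<Rightarrow> bool" where
  "orthogonal_to_palette n t C L \<longleftrightarrow>
     inj_on (\<lambda>(i, j). (L i j, palette n t C (i, j))) (zn2 n)"

definition sudoku_grids :: "int \<Rightarrow> nat \<Rightarrow> (int \<times> int) set \<Rightarrow> array set" where
  "sudoku_grids n t C = {L. latin_square n L \<and> orthogonal_to_palette n t C L}"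

definition rot :: "int \<Rightarrow> array \<Rightarrow> array" where
  "rot n A = (\<lambda>i j. A ((n - 1 - j) mod n) (i mod n))"
definition sflip :: "int \<Rightarrow> array \<Rightarrow> array" where
  "sflip n A = (\<lambda>i j. A (i mod n) ((n - 1 - j) mod n))"
definition tau1 :: "int \<Rightarrow> array \<Rightarrow> array" where
  "tau1 n A = (\<lambda>i j. A ((i - 1) mod n) (j mod n))"
definition tau2 :: "int \<Rightarrow> array \<Rightarrow> array" where
  "tau2 n A = (\<lambda>i j. A (i mod n) ((j - 1) mod n))"

text \<open>Group generated by a set of maps. All maps involved have finite order, so the
  generated group coincides with the closure under identity and composition.\<close>
inductive_set gen_group :: "(array \<Rightarrow> array) set \<Rightarrow> (array \<Rightarrow> array) set" for G where
  gen_id: "id \<in> gen_group G"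
| gen_base: "g \<in> G \<Longrightarrow> g \<in> gen_group G"
| gen_comp: "f \<in> gen_group G \<Longrightarrow> g \<in> gen_group G \<Longrightarrow> f \<circ> g \<in> gen_group G"

end

(* Every generator acts on arrays by reindexing, S |-> S o sigma, with
   sigma(i, j) = (e1 i + a, e2 j + b) mod n and e1, e2 in {1, -1}.  Such a sigma
   acts bijectively on rows and on columns, so it preserves the Latin property, and
   it is an isometry of the Lee torus.  The anticode translates tile Z_n^2: two of
   them meet only if their codewords are at distance at most 2t + 1, and
   |C| |A| = n^2.  Hence sigma also preserves orthogonality to the palette grid as
   soon as it permutes the cores {c, c + (1,0)} of the tiles.  Translations by
   codewords of the linear code C0 do so; the point reflection
   p |-> 2x + (1,0) - p sends the core of x + u onto the core of x - u with its two
   points exchanged; and the column reflection sends x + (u, v) to x + (u, -v),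
   which is again a codeword of C in Case I. *)

theory Submission
  imports Defs
begin

section \<open>Lee distance and sign-affine isometries\<close>

lemma lee_wt1_cong: "u mod n = v mod n \<Longrightarrow> lee_wt1 n u = lee_wt1 n v"
  by (simp add: lee_wt1_def)

lemma lee_wt1_uminus: "(n::int) > 0 \<Longrightarrow> lee_wt1 n (- u) = lee_wt1 n u"
  by (simp add: lee_wt1_def zmod_zminus1_eq_if min.commute)

lemma lee_wt1_sign: "(n::int) > 0 \<Longrightarrow> e \<in> {1, -1} \<Longrightarrow> lee_wt1 n (e * u) = lee_wt1 n u"
  using lee_wt1_uminus by auto

lemma lee_wt1_le_abs:
  assumes "(n::int) > 0" shows "lee_wt1 n u \<le> \<bar>u\<bar>"
proof (cases "u \<ge> 0")
  case True
  then show ?thesis by (simp add: lee_wt1_def zmod_le_nonneg_dividend min.coboundedI1)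
next
  case False
  have "lee_wt1 n (- u) \<le> (- u) mod n" by (simp add: lee_wt1_def)
  also have "\<dots> \<le> - u" using False by (simp add: zmod_le_nonneg_dividend)
  finally show ?thesis using False lee_wt1_uminus[OF assms] by simp
qed

lemma lee_wt1_attained:
  assumes "(n::int) > 0" obtains w where "w mod n = u mod n" "\<bar>w\<bar> = lee_wt1 n u"
proof (cases "u mod n \<le> n - u mod n")
  case True
  then show ?thesis using assms by (intro that[of "u mod n"]) (simp_all add: lee_wt1_def)
next
  case False
  then show ?thesis using assms pos_mod_bound[of n u]
    by (intro that[of "u mod n - n"]) (simp_all add: lee_wt1_def mod_diff_eq[symmetric] abs_if)
qed

lemma lee_wt1_triangle:
  assumes "(n::int) > 0" shows "lee_wt1 n (u + v) \<le> lee_wt1 n u + lee_wt1 n v"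
proof -
  obtain w1 where w1: "w1 mod n = u mod n" "\<bar>w1\<bar> = lee_wt1 n u"
    using lee_wt1_attained assms by blast
  obtain w2 where w2: "w2 mod n = v mod n" "\<bar>w2\<bar> = lee_wt1 n v"
    using lee_wt1_attained assms by blast
  have "lee_wt1 n (u + v) = lee_wt1 n (w1 + w2)"
    using w1(1) w2(1) by (intro lee_wt1_cong) (metis mod_add_eq)
  also have "\<dots> \<le> \<bar>w1 + w2\<bar>" by (rule lee_wt1_le_abs[OF assms])
  finally show ?thesis using w1(2) w2(2) by linarith
qed

lemma lee_dist_commute: "(n::int) > 0 \<Longrightarrow> lee_dist n p q = lee_dist n q p"
  using lee_wt1_uminus[of n "fst q - fst p"] lee_wt1_uminus[of n "snd q - snd p"]
  by (simp add: lee_dist_def)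

lemma lee_dist_triangle: "(n::int) > 0 \<Longrightarrow> lee_dist n p r \<le> lee_dist n p q + lee_dist n q r"
  using lee_wt1_triangle[of n "fst p - fst q" "fst q - fst r"]
    lee_wt1_triangle[of n "snd p - snd q" "snd q - snd r"]
  by (simp add: lee_dist_def)

definition sign_affine :: "int \<Rightarrow> int \<Rightarrow> int \<Rightarrow> int \<Rightarrow> int \<Rightarrow> int \<times> int \<Rightarrow> int \<times> int" where
  "sign_affine n e1 a e2 b p = ((e1 * fst p + a) mod n, (e2 * snd p + b) mod n)"

lemma sign_affine_in_zn2: "(n::int) > 0 \<Longrightarrow> sign_affine n e1 a e2 b p \<in> zn2 n"
  by (simp add: sign_affine_def zn2_def)

lemma sign_mult_add_mod_eq_iff:
  "e \<in> {1, -1} \<Longrightarrow> ((e * i + a) mod n = (e * j + a) mod n) = (i mod n = (j::int) mod n)"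
  by (auto simp: mod_eq_dvd_iff dvd_diff_commute)

lemma inj_on_sign_affine_coord:
  assumes "e \<in> {1, -1}" shows "inj_on (\<lambda>i. (e * i + a) mod n) {0..<n::int}"
proof (rule inj_onI)
  fix i j assume "i \<in> {0..<n}" "j \<in> {0..<n}" "(e * i + a) mod n = (e * j + a) mod n"
  then show "i = j" using sign_mult_add_mod_eq_iff[OF assms] by simp
qed

lemma inj_on_sign_affine:
  assumes "e1 \<in> {1, -1}" "e2 \<in> {1, -1}" shows "inj_on (sign_affine n e1 a e2 b) (zn2 n)"
proof (rule inj_onI)
  fix p q assume "p \<in> zn2 n" "q \<in> zn2 n"
    and eq: "sign_affine n e1 a e2 b p = sign_affine n e1 a e2 b q"
  then have "fst p \<in> {0..<n}" "fst q \<in> {0..<n}" "snd p \<in> {0..<n}" "snd q \<in> {0..<n}"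
    by (auto simp: zn2_def)
  moreover have "(e1 * fst p + a) mod n = (e1 * fst q + a) mod n"
    "(e2 * snd p + b) mod n = (e2 * snd q + b) mod n"
    using eq by (simp_all add: sign_affine_def)
  ultimately have "fst p = fst q" "snd p = snd q"
    using inj_onD[OF inj_on_sign_affine_coord[OF assms(1)]]
      inj_onD[OF inj_on_sign_affine_coord[OF assms(2)]] by blast+
  then show "p = q" by (simp add: prod_eq_iff)
qed

lemma lee_dist_sign_affine:
  assumes "(n::int) > 0" "e1 \<in> {1, -1}" "e2 \<in> {1, -1}"
  shows "lee_dist n (sign_affine n e1 a e2 b p) (sign_affine n e1 a e2 b q) = lee_dist n p q"
proof -
  have "lee_wt1 n ((e * u + c) mod n - (e * v + c) mod n) = lee_wt1 n (u - v)"
    if "e \<in> {1, -1}" for e u v c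
  proof -
    have "((e * u + c) mod n - (e * v + c) mod n) mod n = (e * (u - v)) mod n"
      by (simp add: mod_diff_eq algebra_simps)
    then show ?thesis using lee_wt1_cong lee_wt1_sign[OF assms(1) that] by metis
  qed
  then show ?thesis using assms(2,3) by (simp add: lee_dist_def sign_affine_def)
qed

section \<open>Anticode translates tile the torus\<close>

definition core :: "int \<Rightarrow> int \<times> int \<Rightarrow> (int \<times> int) set" where
  "core n c = {c, addpt n c (1, 0)}"

lemma anticode_core: "anticode n t c = {p \<in> zn2 n. \<exists>q\<in>core n c. lee_dist n p q \<le> int t}"
  by (auto simp: anticode_def core_def)

lemma lee_dist_core:
  assumes "(n::int) \<ge> 2" "q \<in> core n c" shows "lee_dist n c q \<le> 1"
proof -
  have "lee_dist n c (addpt n c (1, 0)) = lee_wt1 n (- 1) + lee_wt1 n 0"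
    unfolding lee_dist_def addpt_def
    by (intro arg_cong2[where f = "(+)"] lee_wt1_cong) (simp_all add: mod_diff_right_eq)
  also have "\<dots> = 1" using assms(1) by (simp add: lee_wt1_def zmod_zminus1_eq_if)
  finally show ?thesis using assms(2) by (auto simp: core_def lee_dist_def lee_wt1_def)
qed

lemma sign_affine_image_anticode:
  assumes "(n::int) > 0" "e1 \<in> {1, -1}" "e2 \<in> {1, -1}"
    and "sign_affine n e1 a e2 b ` core n c = core n c'"
  shows "sign_affine n e1 a e2 b ` anticode n t c \<subseteq> anticode n t c'"
proof
  fix p' assume "p' \<in> sign_affine n e1 a e2 b ` anticode n t c"
  then obtain p q where p: "p' = sign_affine n e1 a e2 b p" and q: "q \<in> core n c"
    and pq: "lee_dist n p q \<le> int t"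
    unfolding anticode_core by blast
  have "sign_affine n e1 a e2 b q \<in> core n c'" using assms(4) q by blast
  moreover have "lee_dist n p' (sign_affine n e1 a e2 b q) \<le> int t"
    using p pq lee_dist_sign_affine[OF assms(1-3)] by simp
  ultimately show "p' \<in> anticode n t c'"
    using p sign_affine_in_zn2[OF assms(1)] unfolding anticode_core by blast
qed

lemma shift_image_core:
  "sign_affine n 1 a 1 b ` core n c = core n (sign_affine n 1 a 1 b c)"
proof -
  have "sign_affine n 1 a 1 b (addpt n c (1, 0)) = addpt n (sign_affine n 1 a 1 b c) (1, 0)"
    by (simp add: sign_affine_def addpt_def mod_simps ac_simps)
  then show ?thesis by (simp add: core_def)
qed

lemma card_anticode_le:
  assumes "(n::int) > 0" "c \<in> zn2 n" "c' \<in> zn2 n"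
  shows "card (anticode n t c) \<le> card (anticode n t c')"
proof -
  let ?\<sigma> = "sign_affine n 1 (fst c' - fst c) 1 (snd c' - snd c)"
  have "?\<sigma> c = c'" using assms(2,3) by (auto simp: sign_affine_def zn2_def)
  then have "?\<sigma> ` anticode n t c \<subseteq> anticode n t c'"
    using assms(1) by (intro sign_affine_image_anticode) (simp_all add: shift_image_core)
  moreover have "inj_on ?\<sigma> (anticode n t c)"
    using inj_on_sign_affine by (rule inj_on_subset) (auto simp: anticode_def)
  moreover have "finite (anticode n t c')"
    by (rule finite_subset[of _ "zn2 n"]) (auto simp: anticode_def zn2_def)
  ultimately show ?thesis by (simp add: card_inj_on_le)
qed

lemma lee_dist_le_cores:
  assumes "(n::int) \<ge> 2" "q \<in> core n c" "q' \<in> core n c'"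
  shows "lee_dist n c c' \<le> lee_dist n q q' + 1"
proof -
  have n: "n > 0" using assms(1) by simp
  have shift: "addpt n p (1, 0) = sign_affine n 1 1 1 0 p" for p
    by (simp add: addpt_def sign_affine_def)
  have "lee_dist n (addpt n c (1, 0)) (addpt n c' (1, 0)) = lee_dist n c c'"
    unfolding shift by (rule lee_dist_sign_affine[OF n]) simp_all
  moreover have "lee_dist n c q \<le> 1" "lee_dist n c' q' \<le> 1"
    using lee_dist_core[OF assms(1)] assms(2,3) by auto
  moreover have "lee_dist n c c' \<le> lee_dist n c q' + lee_dist n q' c'"
    "lee_dist n c q' \<le> lee_dist n c q + lee_dist n q q'"
    using lee_dist_triangle[OF n] by blast+
  ultimately show ?thesis using assms(2,3) lee_dist_commute[OF n, of c' q']
    unfolding core_def by auto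
qed

lemma anticode_disjoint:
  assumes n: "(n::int) \<ge> 2" and C: "dp_code n t C" "c \<in> C" "c' \<in> C"
    and p: "p \<in> anticode n t c" "p \<in> anticode n t c'"
  shows "c = c'"
proof (rule ccontr)
  assume "c \<noteq> c'"
  then have far: "lee_dist n c c' \<ge> 2 * int t + 2" using C by (auto simp: dp_code_def)
  obtain q q' where "q \<in> core n c" "q' \<in> core n c'"
    and "lee_dist n p q \<le> int t" "lee_dist n p q' \<le> int t"
    using p unfolding anticode_core by blast
  moreover have "lee_dist n q q' \<le> lee_dist n q p + lee_dist n p q'"
    using n by (simp add: lee_dist_triangle)
  ultimately have "lee_dist n c c' \<le> 2 * int t + 1"
    using lee_dist_le_cores[OF n] lee_dist_commute[of n p q] n by fastforce
  then show False using far by simp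
qed

lemma translate_eq_image: "translate n x C = sign_affine n 1 (fst x) 1 (snd x) ` C"
proof -
  have "addpt n x = sign_affine n 1 (fst x) 1 (snd x)"
    by (simp add: fun_eq_iff addpt_def sign_affine_def add.commute)
  then show ?thesis by (simp add: translate_def)
qed

lemma dp_code_translate:
  assumes n: "(n::int) > 0" and C0: "dp_code n t C0" shows "dp_code n t (translate n x C0)"
proof -
  let ?\<sigma> = "sign_affine n 1 (fst x) 1 (snd x)"
  have sub: "C0 \<subseteq> zn2 n" using C0 by (simp add: dp_code_def)
  have inj: "inj_on ?\<sigma> C0" using inj_on_sign_affine sub by (rule inj_on_subset) simp_all
  have dist: "lee_dist n (?\<sigma> u) (?\<sigma> u') = lee_dist n u u'" for u u'
    by (rule lee_dist_sign_affine[OF n]) simp_all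
  have "?\<sigma> u \<noteq> ?\<sigma> u' \<longleftrightarrow> u \<noteq> u'" if "u \<in> C0" "u' \<in> C0" for u u'
    using inj_onD[OF inj] that by blast
  then show ?thesis using C0 sign_affine_in_zn2[OF n] card_image[OF inj]
    unfolding dp_code_def translate_eq_image by (simp add: dist) blast
qed

lemma Union_anticodes:
  assumes n: "(n::int) \<ge> 2" and C: "dp_code n t C"
  shows "(\<Union>c\<in>C. anticode n t c) = zn2 n"
proof (rule card_subset_eq)
  have n0: "n > 0" using n by simp
  have fin_zn2: "finite (zn2 n)" by (simp add: zn2_def)
  have sub: "C \<subseteq> zn2 n" and 0: "(0, 0) \<in> zn2 n" using C n by (auto simp: dp_code_def zn2_def)
  have "card (anticode n t c) = card (anticode n t (0, 0))" if "c \<in> C" for c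
    using card_anticode_le[OF n0] sub that 0 by (meson le_antisym subsetD)
  moreover have "card (\<Union>c\<in>C. anticode n t c) = (\<Sum>c\<in>C. card (anticode n t c))"
  proof (rule card_UN_disjoint)
    show "finite C" using finite_subset[OF sub fin_zn2] .
    show "\<forall>c\<in>C. finite (anticode n t c)"
      using finite_subset[OF _ fin_zn2] by (auto simp: anticode_def)
    show "\<forall>c\<in>C. \<forall>c'\<in>C. c \<noteq> c' \<longrightarrow> anticode n t c \<inter> anticode n t c' = {}"
      using anticode_disjoint[OF n C] by blast
  qed
  ultimately have "int (card (\<Union>c\<in>C. anticode n t c)) = n ^ 2"
    using C by (simp add: dp_code_def)
  moreover have "int (card (zn2 n)) = n ^ 2"
    using n0 by (simp add: zn2_def card_cartesian_product power2_eq_square)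
  ultimately show "card (\<Union>c\<in>C. anticode n t c) = card (zn2 n)" by simp
qed (auto simp: anticode_def zn2_def)

lemma palette_eqI:
  assumes "(n::int) \<ge> 2" "dp_code n t C" "c \<in> C" "p \<in> anticode n t c"
  shows "palette n t C p = c"
  unfolding palette_def
proof (rule the_equality)
  show "c \<in> C \<and> p \<in> anticode n t c" using assms(3,4) ..
  show "c' = c" if "c' \<in> C \<and> p \<in> anticode n t c'" for c'
    using anticode_disjoint[OF assms(1,2)] that assms(3,4) by blast
qed

lemma palette_in_anticode:
  assumes "(n::int) \<ge> 2" "dp_code n t C" "p \<in> zn2 n"
  shows "palette n t C p \<in> C" "p \<in> anticode n t (palette n t C p)"
proof -
  obtain c where "c \<in> C" "p \<in> anticode n t c"
    using Union_anticodes[OF assms(1,2)] assms(3) by blast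
  then show "palette n t C p \<in> C" "p \<in> anticode n t (palette n t C p)"
    using palette_eqI[OF assms(1,2)] by simp_all
qed

section \<open>Reindexing Sudoku grids\<close>

definition permutes_cores :: "int \<Rightarrow> (int \<times> int \<Rightarrow> int \<times> int) \<Rightarrow> (int \<times> int) set \<Rightarrow> bool" where
  "permutes_cores n \<sigma> C \<longleftrightarrow> (\<forall>c\<in>C. \<exists>c'\<in>C. \<sigma> ` core n c = core n c')"

lemma palette_sign_affine:
  assumes n: "(n::int) \<ge> 2" and C: "dp_code n t C" and e: "e1 \<in> {1, -1}" "e2 \<in> {1, -1}"
    and \<sigma>: "permutes_cores n (sign_affine n e1 a e2 b) C"
    and pq: "p \<in> zn2 n" "q \<in> zn2 n" "palette n t C p = palette n t C q"
  shows "palette n t C (sign_affine n e1 a e2 b p) = palette n t C (sign_affine n e1 a e2 b q)"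
proof -
  let ?c = "palette n t C p"
  have c: "?c \<in> C" "p \<in> anticode n t ?c" "q \<in> anticode n t ?c"
    using palette_in_anticode[OF n C] pq by metis+
  then obtain c' where c': "c' \<in> C" "sign_affine n e1 a e2 b ` core n ?c = core n c'"
    using \<sigma> unfolding permutes_cores_def by blast
  then have "sign_affine n e1 a e2 b ` anticode n t ?c \<subseteq> anticode n t c'"
    using n e by (intro sign_affine_image_anticode) simp_all
  then show ?thesis using c(2,3) palette_eqI[OF n C c'(1)] by blast
qed

lemma latin_square_reindex:
  assumes S: "latin_square n S"
    and f: "f ` {0..<n} \<subseteq> {0..<n}" "inj_on f {0..<n}"
    and g: "g ` {0..<n} \<subseteq> {0..<n}" "inj_on g {0..<n}"
    and B: "\<And>i j. i \<in> {0..<n} \<Longrightarrow> j \<in> {0..<n} \<Longrightarrow> B i j = S (f i) (g j)"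
  shows "latin_square n B"
  unfolding latin_square_def
proof (intro conjI ballI)
  fix i j assume i: "i \<in> {0..<n}" and j: "j \<in> {0..<n}"
  have "f i \<in> {0..<n}" "g j \<in> {0..<n}" using f(1) g(1) i j by blast+
  then show "B i j \<in> {1..n}" using S B[OF i j] unfolding latin_square_def by simp
next
  fix i assume i: "i \<in> {0..<n}"
  have "f i \<in> {0..<n}" using f(1) i by blast
  then have "inj_on (S (f i)) {0..<n}" using S unfolding latin_square_def by simp
  then have "inj_on (S (f i) \<circ> g) {0..<n}"
    using comp_inj_on[OF g(2)] inj_on_subset[OF _ g(1)] by blast
  then show "inj_on (\<lambda>j. B i j) {0..<n}"
    using B[OF i] by (simp add: inj_on_def)
next
  fix j assume j: "j \<in> {0..<n}"
  have "g j \<in> {0..<n}" using g(1) j by blast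
  then have "inj_on (\<lambda>i. S i (g j)) {0..<n}" using S unfolding latin_square_def by simp
  then have "inj_on ((\<lambda>i. S i (g j)) \<circ> f) {0..<n}"
    using comp_inj_on[OF f(2)] inj_on_subset[OF _ f(1)] by blast
  then show "inj_on (\<lambda>i. B i j) {0..<n}"
    using B[OF _ j] by (simp add: inj_on_def)
qed

lemma orthogonal_to_palette_reindex:
  assumes S: "orthogonal_to_palette n t C S"
    and \<sigma>: "\<sigma> ` zn2 n \<subseteq> zn2 n" "inj_on \<sigma> (zn2 n)"
    and pal: "\<And>p q. p \<in> zn2 n \<Longrightarrow> q \<in> zn2 n \<Longrightarrow> palette n t C p = palette n t C q
      \<Longrightarrow> palette n t C (\<sigma> p) = palette n t C (\<sigma> q)"
    and B: "\<And>p. p \<in> zn2 n \<Longrightarrow> case_prod B p = case_prod S (\<sigma> p)"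
  shows "orthogonal_to_palette n t C B"
  unfolding orthogonal_to_palette_def
proof (rule inj_onI)
  fix p q assume p: "p \<in> zn2 n" and q: "q \<in> zn2 n"
    and "(\<lambda>(i, j). (B i j, palette n t C (i, j))) p = (\<lambda>(i, j). (B i j, palette n t C (i, j))) q"
  then have "case_prod B p = case_prod B q" "palette n t C p = palette n t C q"
    by (simp_all add: case_prod_beta)
  then have "(\<lambda>(i, j). (S i j, palette n t C (i, j))) (\<sigma> p)
      = (\<lambda>(i, j). (S i j, palette n t C (i, j))) (\<sigma> q)"
    using B[OF p] B[OF q] pal[OF p q] by (simp add: case_prod_beta)
  moreover have "\<sigma> p \<in> zn2 n" "\<sigma> q \<in> zn2 n" using \<sigma>(1) p q by blast+
  ultimately have "\<sigma> p = \<sigma> q"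
    using S unfolding orthogonal_to_palette_def by (blast dest: inj_onD)
  then show "p = q" using inj_onD[OF \<sigma>(2)] p q by blast
qed

lemma sudoku_grids_sign_affine:
  assumes n: "(n::int) \<ge> 2" and C: "dp_code n t C" and e: "e1 \<in> {1, -1}" "e2 \<in> {1, -1}"
    and \<sigma>: "permutes_cores n (sign_affine n e1 a e2 b) C"
    and S: "S \<in> sudoku_grids n t C"
    and B: "\<And>i j. i \<in> {0..<n} \<Longrightarrow> j \<in> {0..<n} \<Longrightarrow> B i j = S ((e1 * i + a) mod n) ((e2 * j + b) mod n)"
  shows "B \<in> sudoku_grids n t C"
proof -
  have n0: "n > 0" using n by simp
  have "latin_square n B"
  proof (rule latin_square_reindex[where f = "\<lambda>i. (e1 * i + a) mod n" and g = "\<lambda>j. (e2 * j + b) mod n"])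
    show "latin_square n S" using S by (simp add: sudoku_grids_def)
    show "(\<lambda>i. (e1 * i + a) mod n) ` {0..<n} \<subseteq> {0..<n}" "(\<lambda>j. (e2 * j + b) mod n) ` {0..<n} \<subseteq> {0..<n}"
      using n0 by auto
  qed (use inj_on_sign_affine_coord e B in simp_all)
  moreover have "orthogonal_to_palette n t C B"
  proof (rule orthogonal_to_palette_reindex)
    show "orthogonal_to_palette n t C S" using S by (simp add: sudoku_grids_def)
    show "sign_affine n e1 a e2 b ` zn2 n \<subseteq> zn2 n" using sign_affine_in_zn2[OF n0] by blast
    show "inj_on (sign_affine n e1 a e2 b) (zn2 n)" using inj_on_sign_affine[OF e] .
    show "palette n t C (sign_affine n e1 a e2 b p) = palette n t C (sign_affine n e1 a e2 b q)"
      if "p \<in> zn2 n" "q \<in> zn2 n" "palette n t C p = palette n t C q" for p q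
      using palette_sign_affine[OF n C e \<sigma> that] .
    show "case_prod B p = case_prod S (sign_affine n e1 a e2 b p)" if "p \<in> zn2 n" for p
      using B that by (auto simp: zn2_def sign_affine_def)
  qed
  ultimately show ?thesis by (simp add: sudoku_grids_def)
qed

lemma linear_code_scale:
  "linear_code n C \<Longrightarrow> p \<in> C \<Longrightarrow> ((k * fst p) mod n, (k * snd p) mod n) \<in> C"
  unfolding linear_code_def by blast

lemma linear_code_add: "linear_code n C \<Longrightarrow> p \<in> C \<Longrightarrow> q \<in> C \<Longrightarrow> addpt n p q \<in> C"
  unfolding linear_code_def by blast

lemma permutes_cores_shift_codeword:
  assumes C0: "linear_code n C0" and ab: "(a mod n, b mod n) \<in> C0"
  shows "permutes_cores n (sign_affine n 1 (- a) 1 (- b)) (translate n x C0)"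
  unfolding permutes_cores_def
proof
  fix c assume "c \<in> translate n x C0"
  then obtain u where u: "u \<in> C0" "c = addpt n x u" by (auto simp: translate_def)
  have "((- a) mod n, (- b) mod n) \<in> C0"
    using linear_code_scale[OF C0 ab, of "- 1"] by (simp add: mod_minus_eq)
  then have "addpt n u ((- a) mod n, (- b) mod n) \<in> C0" by (rule linear_code_add[OF C0 u(1)])
  moreover have "sign_affine n 1 (- a) 1 (- b) c = addpt n x (addpt n u ((- a) mod n, (- b) mod n))"
    using u(2) by (simp add: sign_affine_def addpt_def mod_simps algebra_simps)
  ultimately show "\<exists>c'\<in>translate n x C0. sign_affine n 1 (- a) 1 (- b) ` core n c = core n c'"
    unfolding shift_image_core translate_def by blast
qed

lemma permutes_cores_point_reflection:
  assumes C0: "linear_code n C0"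
  shows "permutes_cores n (sign_affine n (- 1) (2 * fst x + 1) (- 1) (2 * snd x)) (translate n x C0)"
  unfolding permutes_cores_def
proof
  let ?\<sigma> = "sign_affine n (- 1) (2 * fst x + 1) (- 1) (2 * snd x)"
  fix c assume "c \<in> translate n x C0"
  then obtain u where u: "u \<in> C0" "c = addpt n x u" by (auto simp: translate_def)
  define c' where "c' = addpt n x ((- 1 * fst u) mod n, (- 1 * snd u) mod n)"
  have "c' \<in> translate n x C0"
    using linear_code_scale[OF C0 u(1)] unfolding c'_def translate_def by blast
  moreover have "?\<sigma> c = addpt n c' (1, 0)" "?\<sigma> (addpt n c (1, 0)) = c'"
    using u(2) by (simp_all add: c'_def sign_affine_def addpt_def mod_simps algebra_simps)
  ultimately show "\<exists>c'\<in>translate n x C0. ?\<sigma> ` core n c = core n c'"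
    by (auto simp: core_def)
qed

lemma permutes_cores_column_reflection:
  assumes C0: "\<And>u v. (u, v) \<in> C0 \<Longrightarrow> (u, (- v) mod n) \<in> C0"
  shows "permutes_cores n (sign_affine n 1 0 (- 1) (2 * snd x)) (translate n x C0)"
  unfolding permutes_cores_def
proof
  let ?\<sigma> = "sign_affine n 1 0 (- 1) (2 * snd x)"
  fix c assume "c \<in> translate n x C0"
  then obtain u where u: "u \<in> C0" "c = addpt n x u" by (auto simp: translate_def)
  define c' where "c' = addpt n x (fst u, (- snd u) mod n)"
  have "c' \<in> translate n x C0"
    using C0[of "fst u" "snd u"] u(1) unfolding c'_def translate_def by simp
  moreover have "?\<sigma> c = c'" "?\<sigma> (addpt n c (1, 0)) = addpt n c' (1, 0)"
    using u(2) by (simp_all add: c'_def sign_affine_def addpt_def mod_simps algebra_simps)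
  ultimately show "\<exists>c'\<in>translate n x C0. ?\<sigma> ` core n c = core n c'"
    by (auto simp: core_def)
qed

lemma tau1_pow_apply:
  assumes "(n::int) > 0" "i \<in> {0..<n}" "j \<in> {0..<n}"
  shows "(tau1 n ^^ k) A i j = A ((i - int k) mod n) j"
  using assms(2)
proof (induction k arbitrary: i)
  case (Suc k)
  have "(tau1 n ^^ Suc k) A i j = (tau1 n ^^ k) A ((i - 1) mod n) j"
    using assms(3) by (simp add: tau1_def)
  also have "\<dots> = A (((i - 1) mod n - int k) mod n) j" using Suc.IH assms(1) by simp
  finally show ?case by (simp add: mod_diff_left_eq algebra_simps)
qed simp

lemma tau2_pow_apply:
  assumes "(n::int) > 0" "i \<in> {0..<n}" "j \<in> {0..<n}"
  shows "(tau2 n ^^ k) A i j = A i ((j - int k) mod n)"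
  using assms(3)
proof (induction k arbitrary: j)
  case (Suc k)
  have "(tau2 n ^^ Suc k) A i j = (tau2 n ^^ k) A i ((j - 1) mod n)"
    using assms(2) by (simp add: tau2_def)
  also have "\<dots> = A i (((j - 1) mod n - int k) mod n)" using Suc.IH assms(1) by simp
  finally show ?case by (simp add: mod_diff_left_eq algebra_simps)
qed simp

lemma diff_one_diff_mod: "(n - 1 - j) mod n = (- 1 - j) mod (n::int)"
proof -
  have "n - 1 - j = (- 1 - j) + n" by simp
  then show ?thesis by (simp only: mod_add_self2)
qed

lemma rot_apply: "i \<in> {0..<n} \<Longrightarrow> rot n A i j = A ((- 1 - j) mod n) i"
  by (simp add: rot_def diff_one_diff_mod)

lemma sflip_apply: "i \<in> {0..<n} \<Longrightarrow> sflip n A i j = A i ((- 1 - j) mod n)"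
  by (simp add: sflip_def diff_one_diff_mod)

lemma sudoku_grids_shift_codeword:
  assumes n: "(n::int) \<ge> 2" and C0: "linear_code n C0" "dp_code n t C0"
    and k: "(int k1 mod n, int k2 mod n) \<in> C0"
    and S: "S \<in> sudoku_grids n t (translate n x C0)"
  shows "(tau1 n ^^ k1 \<circ> tau2 n ^^ k2) S \<in> sudoku_grids n t (translate n x C0)"
proof -
  have n0: "n > 0" using n by simp
  show ?thesis
    by (rule sudoku_grids_sign_affine[OF n dp_code_translate[OF n0 C0(2)] _ _
          permutes_cores_shift_codeword[OF C0(1) k] S])
      (simp_all add: n0 tau1_pow_apply tau2_pow_apply)
qed

lemma sudoku_grids_point_reflection:
  assumes n: "(n::int) \<ge> 2" and C0: "linear_code n C0" "dp_code n t C0"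
    and x: "x1 \<ge> 0" "x2 \<ge> 0"
    and S: "S \<in> sudoku_grids n t (translate n (x1, x2) C0)"
  shows "(tau1 n ^^ nat (2 * x1 + 2) \<circ> tau2 n ^^ nat (2 * x2 + 1) \<circ> rot n ^^ 2) S
    \<in> sudoku_grids n t (translate n (x1, x2) C0)"
proof -
  have n0: "n > 0" using n by simp
  show ?thesis
    by (rule sudoku_grids_sign_affine[OF n dp_code_translate[OF n0 C0(2)] _ _
          permutes_cores_point_reflection[OF C0(1)] S])
      (simp_all add: n0 x numeral_2_eq_2 tau1_pow_apply tau2_pow_apply rot_apply
        mod_diff_right_eq algebra_simps)
qed

lemma sudoku_grids_column_reflection:
  assumes n: "(n::int) \<ge> 2" and C0: "dp_code n t C0"
    and reflect: "\<And>u v. (u, v) \<in> C0 \<Longrightarrow> (u, (- v) mod n) \<in> C0"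
    and x2: "x2 \<ge> 0"
    and S: "S \<in> sudoku_grids n t (translate n (x1, x2) C0)"
  shows "(tau2 n ^^ nat (2 * x2 + 1) \<circ> sflip n) S \<in> sudoku_grids n t (translate n (x1, x2) C0)"
proof -
  have n0: "n > 0" using n by simp
  show ?thesis
    by (rule sudoku_grids_sign_affine[OF n dp_code_translate[OF n0 C0] _ _
          permutes_cores_column_reflection[OF reflect] S])
      (simp_all add: n0 x2 tau2_pow_apply sflip_apply mod_diff_right_eq algebra_simps)
qed

lemma caseI_code_swap:
  assumes "(u, v) \<in> caseI_code n t" shows "(v, u) \<in> caseI_code n t"
proof -
  obtain k m where "u = (k * (int t + 1)) mod n" "v = (k * (int t + 1) + m * (2 * (int t + 1))) mod n"
    using assms unfolding caseI_code_def by auto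
  then show ?thesis unfolding caseI_code_def
    by (intro CollectI exI[of _ "k + 2 * m"] exI[of _ "- m"]) (simp add: algebra_simps)
qed

lemma code_equiv_caseI_code: "code_equiv C0 (caseI_code n t) \<Longrightarrow> C0 = caseI_code n t"
proof -
  let ?swap = "\<lambda>(u :: int, v :: int). (v, u)"
  have swap_caseI: "?swap ` caseI_code n t = caseI_code n t"
    using caseI_code_swap by (force simp: image_iff)
  have "?swap ` ?swap ` C0 = C0" by (simp add: image_image case_prod_beta)
  then show "code_equiv C0 (caseI_code n t) \<Longrightarrow> C0 = caseI_code n t"
    using swap_caseI unfolding code_equiv_def by metis
qed

lemma caseI_code_reflect:
  assumes "(u, v) \<in> caseI_code n t" shows "(u, (- v) mod n) \<in> caseI_code n t"
proof -
  obtain k m where km: "u = (k * (int t + 1)) mod n"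
    "v = (k * (int t + 1) + m * (2 * (int t + 1))) mod n"
    using assms unfolding caseI_code_def by auto
  have "(- v) mod n = (k * (int t + 1) + (- k - m) * (2 * (int t + 1))) mod n"
    unfolding km(2) mod_minus_eq by (simp add: algebra_simps)
  then show ?thesis unfolding caseI_code_def
    by (intro CollectI exI[of _ k] exI[of _ "- k - m"]) (simp add: km(1))
qed

lemma caseI_code_generators:
  "(int (t + 1) mod n, int (t + 1) mod n) \<in> caseI_code n t"
  "(int 0 mod n, int (2 * (t + 1)) mod n) \<in> caseI_code n t"
  unfolding caseI_code_def
  by (intro CollectI exI[of _ 1] exI[of _ 0]; simp add: add.commute)
    (intro CollectI exI[of _ 0] exI[of _ 1]; simp add: add.commute)

lemma gen_group_preserves:
  assumes "\<forall>h\<in>G. \<forall>S\<in>X. h S \<in> X"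
  shows "\<forall>S\<in>X. \<forall>g\<in>gen_group G. g S \<in> X"
proof -
  have "\<forall>S\<in>X. g S \<in> X" if "g \<in> gen_group G" for g
    using that by induction (simp_all add: assms)
  then show ?thesis by blast
qed

lemma sudoku_grids_caseI_symmetries:
  assumes n: "(n::int) \<ge> 2" and C0: "linear_code n C0" "dp_code n t C0" "C0 = caseI_code n t"
    and x: "x1 \<ge> 0" "x2 \<ge> 0"
  shows "\<forall>S\<in>sudoku_grids n t (translate n (x1, x2) C0). \<forall>g\<in>gen_group
      {tau1 n ^^ (t + 1) \<circ> tau2 n ^^ (t + 1), tau2 n ^^ (2 * (t + 1)),
       tau2 n ^^ nat (2 * x2 + 1) \<circ> sflip n,
       tau1 n ^^ nat (2 * x1 + 2) \<circ> tau2 n ^^ nat (2 * x2 + 1) \<circ> rot n ^^ 2}.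
    g S \<in> sudoku_grids n t (translate n (x1, x2) C0)"
  by (rule gen_group_preserves)
    (use sudoku_grids_shift_codeword[OF n C0(1,2) caseI_code_generators(1)[where n = n and t = t, folded C0(3)]]
      sudoku_grids_shift_codeword[OF n C0(1,2) caseI_code_generators(2)[where n = n and t = t, folded C0(3)]]
      sudoku_grids_column_reflection[OF n C0(2) caseI_code_reflect[where n = n and t = t, folded C0(3)] x(2)]
      sudoku_grids_point_reflection[OF n C0(1,2) x]
      in simp)

lemma sudoku_grids_row_code_symmetries:
  assumes n: "(n::int) \<ge> 2" and C0: "linear_code n C0" "dp_code n t C0"
    and ab: "a \<in> {0..<n}" "b \<in> {0..<n}" "C0 = row_code n (a, b)"
    and x: "x1 \<ge> 0" "x2 \<ge> 0"
  shows "\<forall>S\<in>sudoku_grids n t (translate n (x1, x2) C0). \<forall>g\<in>gen_group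
      {tau1 n ^^ nat a \<circ> tau2 n ^^ nat b,
       tau1 n ^^ nat (2 * x1 + 2) \<circ> tau2 n ^^ nat (2 * x2 + 1) \<circ> rot n ^^ 2}.
    g S \<in> sudoku_grids n t (translate n (x1, x2) C0)"
proof -
  have generator: "(int (nat a) mod n, int (nat b) mod n) \<in> C0"
    using ab unfolding row_code_def by (auto intro!: exI[of _ 1])
  show ?thesis
    by (rule gen_group_preserves)
      (use sudoku_grids_shift_codeword[OF n C0 generator] sudoku_grids_point_reflection[OF n C0 x]
        in simp)
qed

theorem mainTheorem4:
  fixes t :: nat and n x1 x2 :: int and C0 C :: "(int \<times> int) set"
  assumes "t \<ge> 1"
    and "n = 2 * (int t + 1) ^ 2"
    and "linear_code n C0"
    and "dp_code n t C0"
    and "x1 \<in> {0..<n}" and "x2 \<in> {0..<n}"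
    and "C = translate n (x1, x2) C0"
  shows "(code_equiv C0 (caseI_code n t) \<longrightarrow>
           (\<forall>S\<in>sudoku_grids n t C. \<forall>g\<in>gen_group
              { tau1 n ^^ (t + 1) \<circ> tau2 n ^^ (t + 1),
                tau2 n ^^ (2 * (t + 1)),
                tau2 n ^^ nat (2 * x2 + 1) \<circ> sflip n,
                tau1 n ^^ nat (2 * x1 + 2) \<circ> tau2 n ^^ nat (2 * x2 + 1) \<circ> rot n ^^ 2 }.
              g S \<in> sudoku_grids n t C))
       \<and> (\<forall>a b. a \<in> {0..<n} \<longrightarrow> b \<in> {0..<n} \<longrightarrow>
           code_equiv C0 (caseII_code n t) \<longrightarrow> C0 = row_code n (a, b) \<longrightarrow>
           (\<forall>S\<in>sudoku_grids n t C. \<forall>g\<in>gen_group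
              { tau1 n ^^ nat a \<circ> tau2 n ^^ nat b,
                tau1 n ^^ nat (2 * x1 + 2) \<circ> tau2 n ^^ nat (2 * x2 + 1) \<circ> rot n ^^ 2 }.
              g S \<in> sudoku_grids n t C))"
proof -
  have "(int t + 1) ^ 2 \<ge> 1" using assms(1) by simp
  then have n: "n \<ge> 2" using assms(2) by simp
  have x: "x1 \<ge> 0" "x2 \<ge> 0" using assms(5,6) by simp_all
  \<comment> \<open>Case II only uses that (a, b) generates C0.\<close>
  show ?thesis
    unfolding assms(7)
    by (intro conjI impI allI,
        erule sudoku_grids_caseI_symmetries[OF n assms(3,4) code_equiv_caseI_code x],
        rule sudoku_grids_row_code_symmetries[OF n assms(3,4) _ _ _ x]; assumption)
qed

end
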